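(* Let $n,p_1,p_2\ge 1$, $p=p_1+p_2$, let $(A_k)_{k\ge 0}$ be a sequence of real $n\times n$ matrices, $C_1\in\mathbb{R}^{p_1\times n}$, $C_2\in\mathbb{R}^{p_2\times n}$, $C=\begin{pmatrix}C_1\\ C_2\end{pmatrix}$, $Q=Q^T>0$ ($n\times n$), and $R=R^T=\begin{pmatrix}R_{11}&R_{12}\\ R_{21}&R_{22}\end{pmatrix}>0$ ($p\times p$, with $R_{11}$ of size $p_1\times p_1$, $R_{22}$ of size $p_2\times p_2$). Fix $\lambda_1,\lambda_2\in[0,1]$. For $X=X^T\ge 0$ define $$g_{\lambda_1\lambda_2}(k,X)=A_kXA_k^T+Q-\lambda_1\lambda_2A_kXC^T(CXC^T+R)^{-1}CXA_k^T-\lambda_1(1-\lambda_2)A_kXC_1^T(C_1XC_1^T+R_{11})^{-1}C_1XA_k^T-(1-\lambda_1)\lambda_2A_kXC_2^T(C_2XC_2^T+R_{22})^{-1}C_2XA_k^T,$$ and for matrices $K\in\mathbb{R}^{n\times p}$, $K_1\in\mathbb{R}^{n\times p_1}$, $K_2\in\mathbb{R}^{n\times p_2}$ define $$\phi(k,K,K_1,K_2,X)=(1-\lambda_1)(1-\lambda_2)(A_kXA_k^T+Q)+\lambda_1\lambda_2\big((A_k+KC)X(A_k+KC)^T+Q+KRK^T\big)$$ $$+\lambda_1(1-\lambda_2)\big((A_k+K_1C_1)X(A_k+K_1C_1)^T+Q+K_1R_{11}K_1^T\big)+(1-\lambda_1)\lambda_2\big((A_k+K_2C_2)X(A_k+K_2C_2)^T+Q+K_2R_{22}K_2^T\big).$$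 Assume there exist matrices $K_k\in\mathbb{R}^{n\times p}$, $K_{k,1}\in\mathbb{R}^{n\times p_1}$, $K_{k,2}\in\mathbb{R}^{n\times p_2}$ ($k\ge0$) and a symmetric matrix $P>0$ such that $P>\phi(k,K_k,K_{k,1},K_{k,2},P)$ for all $k\ge 0$. Then for any symmetric initial condition $P_0\ge 0$, the sequence $P_{k+1}=g_{\lambda_1\lambda_2}(k,P_k)$ is bounded as $k\to\infty$.
   Context: All matrix inequalities are in the Loewner order: $M>N$ means $M-N$ is positive definite, $M\ge N$ means $M-N$ is positive semidefinite. The recursion is the covariance recursion of a two-channel extended Kalman filter with measurement arrival probabilities $\lambda_1,\lambda_2$ and linearized transition matrices $A_k$. *)

theory Defs
  imports "HOL-Analysis.Analysis"
begin

type_synonym 'n sqmat = "real^'n^'n"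

definition sym_mat :: "real^'n^'n \<Rightarrow> bool" where
  "sym_mat M \<longleftrightarrow> transpose M = M"

definition pos_def :: "real^'n^'n \<Rightarrow> bool" where
  "pos_def M \<longleftrightarrow> sym_mat M \<and> (\<forall>x. x \<noteq> 0 \<longrightarrow> x \<bullet> (M *v x) > 0)"

definition pos_semidef :: "real^'n^'n \<Rightarrow> bool" where
  "pos_semidef M \<longleftrightarrow> sym_mat M \<and> (\<forall>x. x \<bullet> (M *v x) \<ge> 0)"

definition loewner_gt :: "real^'n^'n \<Rightarrow> real^'n^'n \<Rightarrow> bool" where
  "loewner_gt M N \<longleftrightarrow> pos_def (M - N)"

definition stack_rows :: "real^'n^('p1::finite) \<Rightarrow> real^'n^('p2::finite) \<Rightarrow> real^'n^('p1 + 'p2)" where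
  "stack_rows C1 C2 = (\<chi> i. case i of Inl a \<Rightarrow> C1 $ a | Inr b \<Rightarrow> C2 $ b)"

definition blk11 :: "real^('p1::finite + 'p2::finite)^('p1 + 'p2) \<Rightarrow> real^'p1^'p1" where
  "blk11 R = (\<chi> i j. R $ Inl i $ Inl j)"

definition blk22 :: "real^('p1::finite + 'p2::finite)^('p1 + 'p2) \<Rightarrow> real^'p2^'p2" where
  "blk22 R = (\<chi> i j. R $ Inr i $ Inr j)"

definition ric_term :: "real^'n^'n \<Rightarrow> real^'n^'q \<Rightarrow> real^'q^'q \<Rightarrow> real^'n^'n \<Rightarrow> real^'n^'n" where
  "ric_term A C R X =
     A ** X ** transpose C ** matrix_inv (C ** X ** transpose C + R) ** C ** X ** transpose A"

definition g_lam ::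
  "(nat \<Rightarrow> real^'n^'n) \<Rightarrow> real^'n^'n \<Rightarrow> real^'n^('p1::finite) \<Rightarrow> real^'n^('p2::finite)
   \<Rightarrow> real^('p1 + 'p2)^('p1 + 'p2) \<Rightarrow> real \<Rightarrow> real \<Rightarrow> nat \<Rightarrow> real^'n^'n \<Rightarrow> real^'n^'n" where
  "g_lam A Q C1 C2 R l1 l2 k X =
     A k ** X ** transpose (A k) + Q
     - (l1 * l2) *\<^sub>R ric_term (A k) (stack_rows C1 C2) R X
     - (l1 * (1 - l2)) *\<^sub>R ric_term (A k) C1 (blk11 R) X
     - ((1 - l1) * l2) *\<^sub>R ric_term (A k) C2 (blk22 R) X"

definition lyap_term :: "real^'n^'n \<Rightarrow> real^'n^'n \<Rightarrow> real^'q^'n \<Rightarrow> real^'n^'q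
   \<Rightarrow> real^'q^'q \<Rightarrow> real^'n^'n \<Rightarrow> real^'n^'n" where
  "lyap_term A Q K C R X =
     (A + K ** C) ** X ** transpose (A + K ** C) + Q + K ** R ** transpose K"

definition phi_lam ::
  "(nat \<Rightarrow> real^'n^'n) \<Rightarrow> real^'n^'n \<Rightarrow> real^'n^('p1::finite) \<Rightarrow> real^'n^('p2::finite)
   \<Rightarrow> real^('p1 + 'p2)^('p1 + 'p2) \<Rightarrow> real \<Rightarrow> real \<Rightarrow> nat
   \<Rightarrow> real^('p1 + 'p2)^'n \<Rightarrow> real^'p1^'n \<Rightarrow> real^'p2^'n \<Rightarrow> real^'n^'n \<Rightarrow> real^'n^'n" where
  "phi_lam A Q C1 C2 R l1 l2 k K K1 K2 X =
     ((1 - l1) * (1 - l2)) *\<^sub>R (A k ** X ** transpose (A k) + Q)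
     + (l1 * l2) *\<^sub>R lyap_term (A k) Q K (stack_rows C1 C2) R X
     + (l1 * (1 - l2)) *\<^sub>R lyap_term (A k) Q K1 C1 (blk11 R) X
     + ((1 - l1) * l2) *\<^sub>R lyap_term (A k) Q K2 C2 (blk22 R) X"

end

theory Submission
  imports Defs
begin

(* Completing the square in the gain K shows that each Riccati term
   A X A' + Q - A X C' (C X C' + R)^-1 C X A' is the Loewner minimum over all K of the
   closed-loop terms (A + K C) X (A + K C)' + Q + K R K', and that the minimum is attained.
   Hence g(k, X) <= phi(k, K, K1, K2, X) for every choice of gains, and g(k, X) >= 0.
   For fixed gains, X |-> phi(k, ..., X) is affine and monotone with phi(k, ..., 0) >= 0, so
   phi(k, ..., P) <= P implies phi(k, ..., c P) <= c P for every c >= 1.  Choosing c >= 1 with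
   P_0 <= c P, induction gives 0 <= P_k <= c P for all k, and polarization bounds the entries
   of such matrices uniformly.  Only the non-strict inequality phi(k, ..., P) <= P is used. *)

lemma transpose_add: "transpose (A + B) = transpose A + transpose (B::real^'n^'m)"
  by (simp add: transpose_def vec_eq_iff)

lemma transpose_zero: "transpose (0::real^'n^'m) = 0"
  by (simp add: transpose_def vec_eq_iff)

lemma matrix_add_rdistrib: "((A::real^'n^'m) + B) ** C = A ** C + B ** C"
  by (vector matrix_matrix_mult_def sum.distrib[symmetric] field_simps)

lemma matrix_inv_right_left:
  assumes "invertible (S::real^'n^'n)"
  shows "S ** matrix_inv S = mat 1" "matrix_inv S ** S = mat 1"
  using someI_ex[OF assms[unfolded invertible_def]] unfolding matrix_inv_def by auto

lemma sym_mat_matrix_inv: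
  assumes "invertible (S::real^'n^'n)" "sym_mat S"
  shows "sym_mat (matrix_inv S)"
proof -
  note inv = matrix_inv_right_left[OF assms(1)]
  have "transpose (matrix_inv S) ** S = mat 1"
    by (metis inv(1) assms(2) sym_mat_def matrix_transpose_mul transpose_mat)
  then have "transpose (matrix_inv S) = transpose (matrix_inv S) ** S ** matrix_inv S"
    by (metis inv(1) matrix_mul_assoc matrix_mul_rid)
  then show ?thesis
    by (simp add: sym_mat_def \<open>transpose (matrix_inv S) ** S = mat 1\<close>)
qed

definition quad_form :: "real^'n^'n \<Rightarrow> real^'n \<Rightarrow> real" where
  "quad_form M x = x \<bullet> (M *v x)"

definition loewner_le :: "real^'n^'n \<Rightarrow> real^'n^'n \<Rightarrow> bool" where
  "loewner_le M N \<longleftrightarrow> (\<forall>x. quad_form M x \<le> quad_form N x)"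

lemma quad_form_add: "quad_form (M + N) x = quad_form M x + quad_form N x"
  by (simp add: quad_form_def matrix_vector_mult_add_rdistrib inner_add_right)

lemma quad_form_diff: "quad_form (M - N) x = quad_form M x - quad_form N x"
  by (simp add: quad_form_def matrix_vector_mult_diff_rdistrib inner_diff_right)

lemma quad_form_scaleR: "quad_form (c *\<^sub>R M) x = c * quad_form M x"
  by (simp add: quad_form_def scaleR_matrix_vector_assoc[symmetric])

lemma quad_form_zero [simp]: "quad_form 0 x = 0" "quad_form M 0 = 0"
  by (simp_all add: quad_form_def)

lemma quad_form_scaleR_vector: "quad_form M (c *\<^sub>R x) = c\<^sup>2 * quad_form M x"
  by (simp add: quad_form_def matrix_vector_mult_scaleR power2_eq_square)

lemma quad_form_congruence:
  "quad_form (B ** X ** transpose B) x = quad_form X (transpose B *v x)"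
  for B :: "real^'m^'n"
  by (simp add: quad_form_def matrix_vector_mul_assoc[symmetric] dot_lmul_matrix)

lemma loewner_le_trans: "loewner_le L M \<Longrightarrow> loewner_le M N \<Longrightarrow> loewner_le L N"
  unfolding loewner_le_def by (meson order_trans)

lemma loewner_gt_imp_le: "loewner_gt M N \<Longrightarrow> loewner_le N M"
  unfolding loewner_gt_def pos_def_def loewner_le_def
  by (metis quad_form_def quad_form_diff quad_form_zero(2) diff_gt_0_iff_gt less_imp_le order_refl)

lemma pos_semidef_iff: "pos_semidef M \<longleftrightarrow> sym_mat M \<and> loewner_le 0 M"
  by (simp add: pos_semidef_def loewner_le_def quad_form_def)

lemma pos_def_imp_pos_semidef: "pos_def M \<Longrightarrow> pos_semidef M"
  unfolding pos_def_def pos_semidef_def by (metis inner_zero_left less_le order_refl)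

lemma pos_semidef_zero: "pos_semidef 0"
  by (simp add: pos_semidef_def sym_mat_def transpose_zero)

lemma pos_semidef_add: "pos_semidef M \<Longrightarrow> pos_semidef N \<Longrightarrow> pos_semidef (M + N)"
  by (simp add: pos_semidef_iff loewner_le_def sym_mat_def transpose_add quad_form_add)

lemma pos_semidef_scaleR: "0 \<le> c \<Longrightarrow> pos_semidef M \<Longrightarrow> pos_semidef (c *\<^sub>R M)"
  by (simp add: pos_semidef_iff loewner_le_def sym_mat_def transpose_scalar quad_form_scaleR)

lemma pos_semidef_congruence: "pos_semidef X \<Longrightarrow> pos_semidef (B ** X ** transpose B)"
  for B :: "real^'m^'n"
  by (simp add: pos_semidef_iff loewner_le_def sym_mat_def quad_form_congruence
      matrix_transpose_mul matrix_mul_assoc)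

lemma pos_def_add_pos_semidef: "pos_semidef M \<Longrightarrow> pos_def N \<Longrightarrow> pos_def (M + N)"
  unfolding pos_def_def pos_semidef_def sym_mat_def
  by (simp add: transpose_add matrix_vector_mult_add_rdistrib inner_add_right add_nonneg_pos)

lemma pos_def_invertible: "pos_def (S::real^'n^'n) \<Longrightarrow> invertible S"
  unfolding pos_def_def
  by (metis inner_zero_right less_irrefl matrix_left_invertible_ker invertible_left_inverse)

lemma sum_UNIV_Plus:
  "(\<Sum>i\<in>UNIV. f i) = (\<Sum>a\<in>UNIV. f (Inl a)) + (\<Sum>b\<in>UNIV. f (Inr b))"
  for f :: "'a::finite + 'b::finite \<Rightarrow> 'c::comm_monoid_add"
  using sum.Plus[of "UNIV::'a set" "UNIV::'b set" f] by (simp add: o_def)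

lemma quad_form_blk11:
  "quad_form (blk11 R) x = quad_form R (\<chi> i. case i of Inl a \<Rightarrow> x $ a | Inr b \<Rightarrow> 0)"
  by (simp add: quad_form_def blk11_def inner_vec_def matrix_vector_mult_def sum_UNIV_Plus)

lemma quad_form_blk22:
  "quad_form (blk22 R) x = quad_form R (\<chi> i. case i of Inl a \<Rightarrow> 0 | Inr b \<Rightarrow> x $ b)"
  by (simp add: quad_form_def blk22_def inner_vec_def matrix_vector_mult_def sum_UNIV_Plus)

lemma pos_def_blk11: "pos_def R \<Longrightarrow> pos_def (blk11 R)"
  unfolding pos_def_def sym_mat_def
proof safe
  assume "transpose R = R"
  then show "transpose (blk11 R) = blk11 R"
    by (simp add: blk11_def transpose_def vec_eq_iff)
next
  fix x :: "real^'a"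
  assume R: "\<forall>y. y \<noteq> 0 \<longrightarrow> 0 < y \<bullet> (R *v y)" and "x \<noteq> 0"
  then have "(\<chi> i. case i of Inl a \<Rightarrow> x $ a | Inr b \<Rightarrow> 0) \<noteq> (0 :: real^('a + 'b))"
    by (metis (no_types, lifting) sum.case(1) vec_eq_iff vec_lambda_beta zero_index)
  with R show "0 < x \<bullet> (blk11 R *v x)"
    using quad_form_blk11[of R x] by (simp add: quad_form_def)
qed

lemma pos_def_blk22: "pos_def R \<Longrightarrow> pos_def (blk22 R)"
  unfolding pos_def_def sym_mat_def
proof safe
  assume "transpose R = R"
  then show "transpose (blk22 R) = blk22 R"
    by (simp add: blk22_def transpose_def vec_eq_iff)
next
  fix x :: "real^'b"
  assume R: "\<forall>y. y \<noteq> 0 \<longrightarrow> 0 < y \<bullet> (R *v y)" and "x \<noteq> 0"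
  then have "(\<chi> i. case i of Inl a \<Rightarrow> 0 | Inr b \<Rightarrow> x $ b) \<noteq> (0 :: real^('a + 'b))"
    by (metis (no_types, lifting) sum.case(2) vec_eq_iff vec_lambda_beta zero_index)
  with R show "0 < x \<bullet> (blk22 R *v x)"
    using quad_form_blk22[of R x] by (simp add: quad_form_def)
qed

lemma lyap_term_completed_square:
  fixes A X :: "real^'n^'n" and C :: "real^'n^'q" and R :: "real^'q^'q" and K :: "real^'q^'n"
  assumes "sym_mat X" "sym_mat R" and inv: "invertible (C ** X ** transpose C + R)"
  defines "S \<equiv> C ** X ** transpose C + R"
  defines "G \<equiv> A ** X ** transpose C ** matrix_inv S"
  shows "lyap_term A Q K C R X
     = A ** X ** transpose A + Q - ric_term A C R X + (K + G) ** S ** transpose (K + G)"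
proof -
  have XT: "transpose X = X" and RT: "transpose R = R" using assms(1,2) by (simp_all add: sym_mat_def)
  have "sym_mat S" unfolding S_def sym_mat_def
    by (simp add: transpose_add matrix_transpose_mul XT RT matrix_mul_assoc)
  then have SiT: "transpose (matrix_inv S) = matrix_inv S"
    using sym_mat_matrix_inv inv S_def sym_mat_def by metis
  have SSi: "Z ** S ** matrix_inv S = Z" for Z :: "real^'q^'n"
    using matrix_inv_right_left(1) inv S_def by (metis matrix_mul_assoc matrix_mul_rid)
  have SiS: "Z ** matrix_inv S ** S = Z" for Z :: "real^'q^'n"
    using matrix_inv_right_left(2) inv S_def by (metis matrix_mul_assoc matrix_mul_rid)
  define M where "M = A ** X ** transpose C"
  have MT: "transpose M = C ** X ** transpose A"
    unfolding M_def by (simp add: matrix_transpose_mul XT matrix_mul_assoc)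
  have G: "G = M ** matrix_inv S" and GT: "transpose G = matrix_inv S ** transpose M"
    unfolding G_def M_def by (simp_all add: matrix_transpose_mul SiT)
  have ric: "ric_term A C R X = M ** matrix_inv S ** transpose M"
    unfolding ric_term_def MT unfolding M_def S_def by (simp add: matrix_mul_assoc)
  have "(K + G) ** S ** transpose (K + G) = (K ** S + M) ** (transpose K + transpose G)"
    by (simp add: transpose_add matrix_add_rdistrib G SiS)
  also have "\<dots> = K ** S ** transpose K + K ** transpose M + M ** transpose K + ric_term A C R X"
    by (simp add: GT ric matrix_add_rdistrib matrix_add_ldistrib matrix_mul_assoc SSi add.assoc)
  finally show ?thesis
    unfolding lyap_term_def MT unfolding M_def S_def
    by (simp add: matrix_add_rdistrib matrix_add_ldistrib matrix_mul_assoc transpose_add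
        matrix_transpose_mul algebra_simps)
qed

lemma pos_def_innovation_covariance:
  "pos_semidef X \<Longrightarrow> pos_def R \<Longrightarrow> pos_def (C ** X ** transpose C + R)"
  by (simp add: pos_def_add_pos_semidef pos_semidef_congruence)

lemma riccati_le_lyap_term:
  assumes "pos_semidef X" "pos_def R"
  shows "loewner_le (A ** X ** transpose A + Q - ric_term A C R X) (lyap_term A Q K C R X)"
proof -
  let ?S = "C ** X ** transpose C + R"
  have S: "pos_def ?S" using pos_def_innovation_covariance assms .
  have "sym_mat X" "sym_mat R" using assms by (simp_all add: pos_semidef_def pos_def_def)
  note square = lyap_term_completed_square[OF this pos_def_invertible[OF S]]
  let ?K = "K + A ** X ** transpose C ** matrix_inv ?S"
  have "loewner_le 0 (?K ** ?S ** transpose ?K)"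
    using pos_semidef_congruence[OF pos_def_imp_pos_semidef[OF S]] pos_semidef_iff by blast
  then show ?thesis
    by (simp add: square loewner_le_def quad_form_add)
qed

lemma lyap_term_optimal_gain:
  assumes "pos_semidef X" "pos_def R"
  shows "lyap_term A Q (- (A ** X ** transpose C ** matrix_inv (C ** X ** transpose C + R))) C R X
    = A ** X ** transpose A + Q - ric_term A C R X"
proof -
  have S: "pos_def (C ** X ** transpose C + R)" using pos_def_innovation_covariance assms .
  have "sym_mat X" "sym_mat R" using assms by (simp_all add: pos_semidef_def pos_def_def)
  then show ?thesis
    using lyap_term_completed_square[OF _ _ pos_def_invertible[OF S]] by (simp add: transpose_zero)
qed

lemma pos_semidef_lyap_term:
  "pos_semidef X \<Longrightarrow> pos_semidef Q \<Longrightarrow> pos_semidef R \<Longrightarrow> pos_semidef (lyap_term A Q K C R X)"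
  unfolding lyap_term_def by (intro pos_semidef_add pos_semidef_congruence)

lemma pos_semidef_riccati:
  assumes "pos_semidef X" "pos_semidef Q" "pos_def R"
  shows "pos_semidef (A ** X ** transpose A + Q - ric_term A C R X)"
  using pos_semidef_lyap_term[OF assms(1,2) pos_def_imp_pos_semidef[OF assms(3)]]
    lyap_term_optimal_gain[OF assms(1,3)] by metis

lemma g_lam_convex_combination:
  "g_lam A Q C1 C2 R l1 l2 k X =
     ((1 - l1) * (1 - l2)) *\<^sub>R (A k ** X ** transpose (A k) + Q)
   + (l1 * l2) *\<^sub>R (A k ** X ** transpose (A k) + Q - ric_term (A k) (stack_rows C1 C2) R X)
   + (l1 * (1 - l2)) *\<^sub>R (A k ** X ** transpose (A k) + Q - ric_term (A k) C1 (blk11 R) X)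
   + ((1 - l1) * l2) *\<^sub>R (A k ** X ** transpose (A k) + Q - ric_term (A k) C2 (blk22 R) X)"
proof -
  have "((1 - l1) * (1 - l2) + l1 * l2 + l1 * (1 - l2) + (1 - l1) * l2) *\<^sub>R M = M" for M :: "real^'n^'n"
    by (simp add: algebra_simps)
  then show ?thesis
    unfolding g_lam_def by (simp add: algebra_simps)
qed

lemma g_lam_le_phi_lam:
  fixes A :: "nat \<Rightarrow> real^'n^'n"
  assumes "pos_semidef X" "pos_def R" "0 \<le> l1" "l1 \<le> 1" "0 \<le> l2" "l2 \<le> 1"
  shows "loewner_le (g_lam A Q C1 C2 R l1 l2 k X) (phi_lam A Q C1 C2 R l1 l2 k K K1 K2 X)"
  unfolding loewner_le_def
proof
  fix x
  have weights: "0 \<le> l1 * l2" "0 \<le> l1 * (1 - l2)" "0 \<le> (1 - l1) * l2"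
    using assms(3-6) by simp_all
  have "quad_form (A k ** X ** transpose (A k) + Q - ric_term (A k) C S X) x
      \<le> quad_form (lyap_term (A k) Q G C S X) x" if "pos_def S" for C :: "real^'n^'q" and S G
    using riccati_le_lyap_term[OF assms(1) that] by (simp add: loewner_le_def)
  note channel = this[OF assms(2)] this[OF pos_def_blk11[OF assms(2)]] this[OF pos_def_blk22[OF assms(2)]]
  show "quad_form (g_lam A Q C1 C2 R l1 l2 k X) x
      \<le> quad_form (phi_lam A Q C1 C2 R l1 l2 k K K1 K2 X) x"
    unfolding g_lam_convex_combination phi_lam_def quad_form_add quad_form_scaleR
    using channel weights by (metis add_mono order_refl mult_left_mono)
qed

lemma pos_semidef_g_lam:
  assumes "pos_semidef X" "pos_semidef Q" "pos_def R" "0 \<le> l1" "l1 \<le> 1" "0 \<le> l2" "l2 \<le> 1"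
  shows "pos_semidef (g_lam A Q C1 C2 R l1 l2 k X)"
  unfolding g_lam_convex_combination
  using assms pos_def_blk11[OF assms(3)] pos_def_blk22[OF assms(3)]
  by (intro pos_semidef_add pos_semidef_scaleR pos_semidef_riccati pos_semidef_congruence) simp_all

lemma blk11_zero [simp]: "blk11 0 = 0" and blk22_zero [simp]: "blk22 0 = 0"
  by (simp_all add: blk11_def blk22_def vec_eq_iff)

lemma phi_lam_affine:
  "phi_lam A Q C1 C2 R l1 l2 k K K1 K2 X
     = phi_lam A Q C1 C2 R l1 l2 k K K1 K2 0 + phi_lam A 0 C1 C2 0 l1 l2 k K K1 K2 X"
  unfolding phi_lam_def lyap_term_def by (simp add: algebra_simps)

lemma matrix_mul_scaleR_middle: "B ** (c *\<^sub>R X) ** D = c *\<^sub>R (B ** X ** D)"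
  for B :: "real^'m^'n" and X :: "real^'k^'m"
  by (simp add: matrix_scalar_ac scalar_matrix_assoc)

lemma phi_lam_linear_part_scaleR:
  "phi_lam A 0 C1 C2 0 l1 l2 k K K1 K2 (c *\<^sub>R X) = c *\<^sub>R phi_lam A 0 C1 C2 0 l1 l2 k K K1 K2 X"
  unfolding phi_lam_def lyap_term_def
  by (simp only: matrix_mul_scaleR_middle) (simp add: algebra_simps)

lemma phi_lam_scaleR:
  "phi_lam A Q C1 C2 R l1 l2 k K K1 K2 (c *\<^sub>R X)
     = c *\<^sub>R phi_lam A Q C1 C2 R l1 l2 k K K1 K2 X
       + (1 - c) *\<^sub>R phi_lam A Q C1 C2 R l1 l2 k K K1 K2 0"
  by (subst (1 2) phi_lam_affine) (simp add: phi_lam_linear_part_scaleR algebra_simps)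

lemma phi_lam_mono:
  fixes A :: "nat \<Rightarrow> real^'n^'n"
  assumes "loewner_le X Y" "0 \<le> l1" "l1 \<le> 1" "0 \<le> l2" "l2 \<le> 1"
  shows "loewner_le (phi_lam A Q C1 C2 R l1 l2 k K K1 K2 X) (phi_lam A Q C1 C2 R l1 l2 k K K1 K2 Y)"
  unfolding loewner_le_def
proof
  fix x
  have weights: "0 \<le> (1 - l1) * (1 - l2)" "0 \<le> l1 * l2" "0 \<le> l1 * (1 - l2)" "0 \<le> (1 - l1) * l2"
    using assms(2-5) by simp_all
  have "quad_form (B ** X ** transpose B) x \<le> quad_form (B ** Y ** transpose B) x" for B :: "real^'n^'n"
    using assms(1) by (simp add: loewner_le_def quad_form_congruence)
  then show "quad_form (phi_lam A Q C1 C2 R l1 l2 k K K1 K2 X) x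
      \<le> quad_form (phi_lam A Q C1 C2 R l1 l2 k K K1 K2 Y) x"
    unfolding phi_lam_def lyap_term_def quad_form_add quad_form_scaleR
    using weights by (metis add_mono order_refl mult_left_mono)
qed

lemma pos_semidef_phi_lam:
  assumes "pos_semidef X" "pos_semidef Q" "pos_def R" "0 \<le> l1" "l1 \<le> 1" "0 \<le> l2" "l2 \<le> 1"
  shows "pos_semidef (phi_lam A Q C1 C2 R l1 l2 k K K1 K2 X)"
  unfolding phi_lam_def
  using assms pos_def_blk11[OF assms(3)] pos_def_blk22[OF assms(3)]
  by (intro pos_semidef_add pos_semidef_scaleR pos_semidef_lyap_term pos_semidef_congruence)
    (simp_all add: pos_def_imp_pos_semidef)

lemma phi_lam_scaled_bound:
  fixes A :: "nat \<Rightarrow> real^'n^'n"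
  assumes X: "loewner_le X (c *\<^sub>R P)" and c: "1 \<le> c"
    and P: "loewner_le (phi_lam A Q C1 C2 R l1 l2 k K K1 K2 P) P"
    and Q: "pos_semidef Q" and R: "pos_def R"
    and l: "0 \<le> l1" "l1 \<le> 1" "0 \<le> l2" "l2 \<le> 1"
  shows "loewner_le (phi_lam A Q C1 C2 R l1 l2 k K K1 K2 X) (c *\<^sub>R P)"
proof -
  let ?phi = "phi_lam A Q C1 C2 R l1 l2 k K K1 K2"
  have "loewner_le (?phi (c *\<^sub>R P)) (c *\<^sub>R P)"
    unfolding loewner_le_def phi_lam_scaleR quad_form_add quad_form_scaleR
  proof
    fix x
    have "0 \<le> quad_form (?phi 0) x"
      using pos_semidef_phi_lam[OF pos_semidef_zero Q R l] by (simp add: pos_semidef_iff loewner_le_def)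
    moreover have "quad_form (?phi P) x \<le> quad_form P x"
      using P by (simp add: loewner_le_def)
    ultimately have "c * quad_form (?phi P) x \<le> c * quad_form P x"
      and "(1 - c) * quad_form (?phi 0) x \<le> 0"
      using c by (simp_all add: mult_nonpos_nonneg)
    then show "c * quad_form (?phi P) x + (1 - c) * quad_form (?phi 0) x \<le> c * quad_form P x"
      by linarith
  qed
  then show ?thesis
    using phi_lam_mono[OF X l] loewner_le_trans by blast
qed

lemma quad_form_le_norm: "\<exists>b. \<forall>x. quad_form M x \<le> b * (norm x)\<^sup>2"
proof -
  obtain b where b: "\<And>x. norm (M *v x) \<le> norm x * b"
    using bounded_linear.pos_bounded[OF matrix_vector_mul_bounded_linear[of M]] by blast
  have "quad_form M x \<le> b * (norm x)\<^sup>2" for x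
  proof -
    have "quad_form M x \<le> norm x * norm (M *v x)"
      unfolding quad_form_def using Cauchy_Schwarz_ineq2[of x "M *v x"] by linarith
    also have "\<dots> \<le> norm x * (norm x * b)" by (rule mult_left_mono[OF b]) simp
    finally show ?thesis by (simp add: power2_eq_square algebra_simps)
  qed
  then show ?thesis by blast
qed

lemma pos_def_ge_norm: "pos_def M \<Longrightarrow> \<exists>m>0. \<forall>x. m * (norm x)\<^sup>2 \<le> quad_form M x"
proof -
  assume M: "pos_def M"
  have "continuous_on (sphere 0 1) (quad_form M)"
    unfolding quad_form_def by (intro continuous_intros linear_continuous_on) auto
  moreover have "sphere (0::real^'n) 1 \<noteq> {}"
    using norm_axis_1 by (metis mem_sphere_0 empty_iff)
  ultimately obtain u where u: "u \<in> sphere 0 1" "\<And>y. y \<in> sphere 0 1 \<Longrightarrow> quad_form M u \<le> quad_form M y"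
    using continuous_attains_inf[OF compact_sphere] by blast
  have "u \<noteq> 0" using u(1) by auto
  then have pos: "quad_form M u > 0" using M by (simp add: pos_def_def quad_form_def)
  have bound: "quad_form M u * (norm x)\<^sup>2 \<le> quad_form M x" for x
  proof (cases "x = 0")
    case False
    then have "quad_form M u \<le> quad_form M ((1 / norm x) *\<^sub>R x)" using u(2) by simp
    then show ?thesis
      using False by (simp add: quad_form_scaleR_vector field_simps)
  qed simp
  show ?thesis using pos bound by (intro exI[of _ "quad_form M u"]) simp
qed

lemma pos_def_dominates: "pos_def P \<Longrightarrow> \<exists>c\<ge>1. loewner_le M (c *\<^sub>R P)"
proof -
  assume "pos_def P"
  then obtain m where m: "m > 0" "\<And>x. m * (norm x)\<^sup>2 \<le> quad_form P x"
    using pos_def_ge_norm by blast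
  obtain b where b: "\<And>x. quad_form M x \<le> b * (norm x)\<^sup>2"
    using quad_form_le_norm by blast
  define c where "c = max 1 (b / m)"
  have "quad_form M x \<le> quad_form (c *\<^sub>R P) x" for x
  proof -
    have "quad_form M x \<le> (b / m) * (m * (norm x)\<^sup>2)" using b m(1) by simp
    also have "\<dots> \<le> c * (m * (norm x)\<^sup>2)"
      unfolding c_def by (rule mult_right_mono) (use m(1) in simp_all)
    also have "\<dots> \<le> c * quad_form P x"
      unfolding c_def by (rule mult_left_mono[OF m(2)]) simp
    finally show ?thesis by (simp add: quad_form_scaleR)
  qed
  moreover have "1 \<le> c" unfolding c_def by simp
  ultimately show ?thesis unfolding loewner_le_def by (intro exI[of _ c]) simp
qed

lemma sym_mat_entry_bound:
  assumes "sym_mat (M::real^'n^'n)" and "\<And>x. \<bar>quad_form M x\<bar> \<le> b * (norm x)\<^sup>2"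
  shows "\<bar>M $ i $ j\<bar> \<le> b"
proof -
  let ?u = "axis i (1::real) :: real^'n" and ?v = "axis j (1::real) :: real^'n"
  have "?v \<bullet> (M *v ?u) = (transpose M *v ?v) \<bullet> ?u"
    by (simp add: dot_lmul_matrix)
  also have "\<dots> = ?u \<bullet> (M *v ?v)"
    using assms(1) unfolding sym_mat_def by (metis inner_commute)
  finally have polarization: "4 * (?u \<bullet> (M *v ?v)) = quad_form M (?u + ?v) - quad_form M (?u - ?v)"
    by (simp add: quad_form_def matrix_vector_right_distrib matrix_vector_mult_diff_distrib
        inner_add_left inner_add_right inner_diff_left inner_diff_right)
  have "?u \<bullet> (M *v ?v) = M $ i $ j"
    by (simp only: inner_axis') (simp add: matrix_vector_mult_def axis_def if_distrib cong: if_cong)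
  then have "4 * \<bar>M $ i $ j\<bar> = \<bar>quad_form M (?u + ?v) - quad_form M (?u - ?v)\<bar>"
    using polarization by simp
  also have "\<dots> \<le> b * (norm (?u + ?v))\<^sup>2 + b * (norm (?u - ?v))\<^sup>2"
    using assms(2)[of "?u + ?v"] assms(2)[of "?u - ?v"] by linarith
  also have "\<dots> = b * (2 * (norm ?u)\<^sup>2 + 2 * (norm ?v)\<^sup>2)"
    by (simp add: power2_norm_eq_inner inner_commute algebra_simps)
  finally show ?thesis by simp
qed

lemma norm_matrix_le_entries:
  assumes "\<And>i j. \<bar>(M::real^'n^'m) $ i $ j\<bar> \<le> b"
  shows "norm M \<le> real CARD('m) * (real CARD('n) * b)"
proof -
  have "norm M \<le> (\<Sum>i\<in>UNIV. norm (M $ i))"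
    unfolding norm_vec_def by (rule L2_set_le_sum) auto
  also have "\<dots> \<le> (\<Sum>i\<in>(UNIV::'m set). real CARD('n) * b)"
  proof (rule sum_mono)
    fix i
    have "norm (M $ i) \<le> (\<Sum>j\<in>UNIV. \<bar>M $ i $ j\<bar>)" by (rule norm_le_l1_cart)
    also have "\<dots> \<le> (\<Sum>j\<in>(UNIV::'n set). b)" by (rule sum_mono) (rule assms)
    finally show "norm (M $ i) \<le> real CARD('n) * b" by simp
  qed
  finally show ?thesis by simp
qed

lemma bounded_pos_semidef_loewner_le:
  "bounded {M. pos_semidef M \<and> loewner_le M (B::real^'n^'n)}"
proof -
  obtain b where b: "\<And>x. quad_form B x \<le> b * (norm x)\<^sup>2"
    using quad_form_le_norm by blast
  have "norm M \<le> real CARD('n) * (real CARD('n) * b)"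
    if "pos_semidef M" "loewner_le M B" for M :: "real^'n^'n"
  proof (rule norm_matrix_le_entries, rule sym_mat_entry_bound)
    show "sym_mat M" using that(1) by (simp add: pos_semidef_def)
    show "\<bar>quad_form M x\<bar> \<le> b * (norm x)\<^sup>2" for x
      using that b[of x] by (simp add: pos_semidef_iff loewner_le_def abs_le_iff) (meson order_trans)
  qed
  then show ?thesis unfolding bounded_iff by blast
qed

theorem theorem1:
  fixes A :: "nat \<Rightarrow> real^'n^'n"
    and Q :: "real^'n^'n"
    and C1 :: "real^'n^'p1"
    and C2 :: "real^'n^'p2"
    and R :: "real^('p1 + 'p2)^('p1 + 'p2)"
    and l1 l2 :: real
    and Pk :: "nat \<Rightarrow> real^'n^'n"
  assumes "pos_def Q"
    and "pos_def R"
    and "0 \<le> l1" "l1 \<le> 1" "0 \<le> l2" "l2 \<le> 1"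
    and "\<exists>(K :: nat \<Rightarrow> real^('p1 + 'p2)^'n) (K1 :: nat \<Rightarrow> real^'p1^'n)
           (K2 :: nat \<Rightarrow> real^'p2^'n) (P :: real^'n^'n).
           pos_def P \<and>
           (\<forall>k. loewner_gt P (phi_lam A Q C1 C2 R l1 l2 k (K k) (K1 k) (K2 k) P))"
    and "pos_semidef (Pk 0)"
    and "\<And>k. Pk (Suc k) = g_lam A Q C1 C2 R l1 l2 k (Pk k)"
  shows "bounded (range Pk)"
proof -
  note Q = pos_def_imp_pos_semidef[OF assms(1)] and R = assms(2) and l = assms(3-6)
  obtain K K1 K2 P where "pos_def P"
    and P: "\<And>k. loewner_le (phi_lam A Q C1 C2 R l1 l2 k (K k) (K1 k) (K2 k) P) P"
    using assms(7) loewner_gt_imp_le by blast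
  then obtain c where c: "1 \<le> c" "loewner_le (Pk 0) (c *\<^sub>R P)"
    using pos_def_dominates by blast
  have psd: "pos_semidef (Pk k)" for k
    by (induction k) (simp_all add: assms(8,9) pos_semidef_g_lam Q R l)
  have "loewner_le (Pk k) (c *\<^sub>R P)" for k
  proof (induction k)
    case (Suc k)
    have "loewner_le (Pk (Suc k)) (phi_lam A Q C1 C2 R l1 l2 k (K k) (K1 k) (K2 k) (Pk k))"
      using g_lam_le_phi_lam[OF psd R l] assms(9) by simp
    moreover have "loewner_le (phi_lam A Q C1 C2 R l1 l2 k (K k) (K1 k) (K2 k) (Pk k)) (c *\<^sub>R P)"
      using phi_lam_scaled_bound[OF Suc c(1) P Q R l] .
    ultimately show ?case by (rule loewner_le_trans)
  qed (use c in simp)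
  with psd have "range Pk \<subseteq> {M. pos_semidef M \<and> loewner_le M (c *\<^sub>R P)}" by blast
  then show ?thesis using bounded_pos_semidef_loewner_le bounded_subset by blast
qed

end
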